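(* For an integer $n\ge1$, let $\mathcal{G}^{\mathrm{tree}}_{n,1}$ be the directed tree with unit edge weights consisting of a root node and two branches: a directed path of $n$ edges from a leaf $k$ to the root and a single edge from a leaf $j$ to the root (so it has $n+2$ nodes). Then the effective resistance between its two leaves is $$r(n,1)=2(n-1)+2^{2-n}.$$
   Context: For a directed graph with nonnegative adjacency matrix $A=[a_{i,j}]$ ($a_{i,j}>0$ iff there is an edge from $i$ to $j$), let $D$ be the diagonal matrix of out-degrees $d_k=\sum_j a_{k,j}$ and $L=D-A$. For a connected graph (one with a node reachable from every node) on $N$ nodes, let $\Pi=I_N-\frac1N\mathbf{1}_N\mathbf{1}_N^T$, $Q\in\mathbb{R}^{(N-1)\times N}$ with $Q\mathbf{1}_N=0$, $QQ^T=I_{N-1}$, $Q^TQ=\Pi$; $\overline L=QLQ^T$; $\Sigma$ the unique solution of $\overline L\Sigma+\Sigma\overline L^T=I_{N-1}$; $X=2Q^T\Sigma Q$; and the effective resistance $r_{k,j}=x_{k,k}+x_{j,j}-2x_{k,j}$. More generally, for integers $n,m\ge1$, $\mathcal{G}^{\mathrm{tree}}_{n,m}$ denotes the unit-weight directed tree with $n+m+1$ nodes formed by a directed path of $n$ edges from one leaf to a root and a directed path of $m$ edges from another leaf to the same root, and $r(n,m)$ denotes the effective resistance between its two leaves. *)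

theory Defs
  imports "Jordan_Normal_Form.Matrix"
begin

definition out_degree :: "real mat \<Rightarrow> nat \<Rightarrow> real" where
  "out_degree A k = (\<Sum>j<dim_col A. A $$ (k, j))"

definition laplacian :: "real mat \<Rightarrow> real mat" where
  "laplacian A = mat (dim_row A) (dim_col A)
     (\<lambda>(i, j). (if i = j then out_degree A i else 0) - A $$ (i, j))"

definition is_Q_matrix :: "nat \<Rightarrow> real mat \<Rightarrow> bool" where
  "is_Q_matrix N Q \<longleftrightarrow> Q \<in> carrier_mat (N - 1) N
     \<and> Q *\<^sub>v (vec N (\<lambda>_. 1)) = 0\<^sub>v (N - 1)
     \<and> Q * Q\<^sup>T = 1\<^sub>m (N - 1)
     \<and> Q\<^sup>T * Q = 1\<^sub>m N - (1 / real N) \<cdot>\<^sub>m mat N N (\<lambda>_. 1)"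

definition eff_resistance :: "real mat \<Rightarrow> nat \<Rightarrow> nat \<Rightarrow> real" where
  "eff_resistance A k j =
    (let N = dim_row A;
         L = laplacian A;
         Q = (SOME Q. is_Q_matrix N Q);
         Lb = Q * L * Q\<^sup>T;
         S = (THE S. S \<in> carrier_mat (N - 1) (N - 1) \<and> Lb * S + S * Lb\<^sup>T = 1\<^sub>m (N - 1));
         X = 2 \<cdot>\<^sub>m (Q\<^sup>T * S * Q)
     in X $$ (k, k) + X $$ (j, j) - 2 * X $$ (k, j))"

text \<open>The tree G^tree_{n,m} on nodes 0..n+m: path 0 -> 1 -> ... -> n (root n, leaf 0) and
  path n+1 -> n+2 -> ... -> n+m -> n (leaf n+1); unit weights.\<close>
definition tree_edge :: "nat \<Rightarrow> nat \<Rightarrow> nat \<Rightarrow> nat \<Rightarrow> bool" where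
  "tree_edge n m i j \<longleftrightarrow>
     (i < n \<and> j = i + 1) \<or> (n + 1 \<le> i \<and> i < n + m \<and> j = i + 1) \<or> (i = n + m \<and> j = n)"

definition tree_adj :: "nat \<Rightarrow> nat \<Rightarrow> real mat" where
  "tree_adj n m = mat (n + m + 1) (n + m + 1) (\<lambda>(i, j). if tree_edge n m i j then 1 else 0)"

definition r_tree :: "nat \<Rightarrow> nat \<Rightarrow> real" where
  "r_tree n m = eff_resistance (tree_adj n m) 0 (n + 1)"

end

theory Submission
  imports Defs
begin

(* Both trees are functional digraphs: every node i except the root has the single out-edge
   i -> f i, so the Laplacian is L = 1 - P for the 0/1 matrix P of f (with f root = root), and
   P^m sends every node to the root.  The weights w(a,b) = C(a+b,a) / 2^(a+b+1) satisfy Pascal's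
   rule 2 w(a,b) = w(a-1,b) + w(a,b-1), so Z = sum_{a,b<m} w(a,b) P^a R (P^T)^b, with R the Gram
   matrix of the vectors e_x - e_root, telescopes to L Z + Z L^T = R.  Conjugated by Q this solves
   the reduced Lyapunov equation, whose solution is unique because Q P Q^T is nilpotent.  Hence
   r_{k,j} = 2 sum_{a,b<m} w(a,b) <d_a, d_b> with d_a = e_{f^a k} - e_{f^a j}.  For the two leaves
   of G_{n,1} these inner products are [a = b] + [a = 0 <-> b = 0], and the column sums
   sum_{a<=b} w(a,b) = 1/2 evaluate the total to 2(n-1) + 2^(2-n). *)

section \<open>Pascal weights\<close>

(* pascal_weight a b = C(a+b,a) / 2^(a+b+1), the coefficient of P^a X (P^T)^b in the inverse
   of the operator X -> 2 X - P X - X P^T for nilpotent P. *)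

fun pascal_weight :: "nat \<Rightarrow> nat \<Rightarrow> real" where
  "pascal_weight 0 0 = 1 / 2"
| "pascal_weight (Suc a) 0 = pascal_weight a 0 / 2"
| "pascal_weight 0 (Suc b) = pascal_weight 0 b / 2"
| "pascal_weight (Suc a) (Suc b) = (pascal_weight a (Suc b) + pascal_weight (Suc a) b) / 2"

lemma pascal_weight_sym: "pascal_weight a b = pascal_weight b a"
  by (induction a b rule: pascal_weight.induct) auto

lemma pascal_weight_0_left: "pascal_weight 0 b = 1 / 2 ^ Suc b"
  by (induction b) auto

lemma pascal_weight_recurrence:
  "2 * pascal_weight a b - (if a = 0 then 0 else pascal_weight (a - 1) b)
     - (if b = 0 then 0 else pascal_weight a (b - 1)) = of_bool (a = 0 \<and> b = 0)"
  by (cases a; cases b) (auto simp: field_simps)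

lemma pascal_weight_column_sum: "(\<Sum>a\<le>b. pascal_weight a b) = 1 / 2"
proof (induction b)
  case 0
  show ?case by simp
next
  case (Suc b)
  let ?w = pascal_weight
  have "2 * (\<Sum>a\<le>Suc b. ?w a (Suc b)) = 2 * ?w 0 (Suc b) + (\<Sum>a\<le>b. 2 * ?w (Suc a) (Suc b))"
    by (simp only: sum.atMost_Suc_shift sum_distrib_left distrib_left)
  also have "\<dots> = ?w 0 b + (\<Sum>a\<le>b. ?w a (Suc b)) + (\<Sum>a\<le>b. ?w (Suc a) b)"
    by (simp add: sum.distrib add_divide_distrib)
  finally have split: "2 * (\<Sum>a\<le>Suc b. ?w a (Suc b))
      = ?w 0 b + (\<Sum>a\<le>b. ?w a (Suc b)) + (\<Sum>a\<le>b. ?w (Suc a) b)" .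
  have "?w 0 b + (\<Sum>a\<le>b. ?w (Suc a) b) = 1 / 2 + ?w (Suc b) b"
    using Suc sum.atMost_Suc_shift[of "\<lambda>a. ?w a b" b] by simp
  moreover have "(\<Sum>a\<le>Suc b. ?w a (Suc b)) = (\<Sum>a\<le>b. ?w a (Suc b)) + ?w (Suc b) b"
    using pascal_weight_sym[of b "Suc b"] by simp
  ultimately show ?case using split by linarith
qed

lemma pascal_weight_sum_telescope:
  fixes h :: "nat \<Rightarrow> nat \<Rightarrow> real"
  assumes "\<And>b. h m b = 0" and "\<And>a. h a m = 0"
  shows "(\<Sum>a<m. \<Sum>b<m. pascal_weight a b * (2 * h a b - h (Suc a) b - h a (Suc b))) = h 0 0"
proof -
  let ?w = pascal_weight
  have shift: "(\<Sum>a<m. g (Suc a)) = (\<Sum>a<m. g a)" if "g 0 = 0" "g m = 0" for g :: "nat \<Rightarrow> real"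
    using sum.lessThan_Suc_shift[of g m] that by simp
  have row: "(\<Sum>a<m. \<Sum>b<m. ?w a b * h (Suc a) b)
      = (\<Sum>a<m. \<Sum>b<m. (if a = 0 then 0 else ?w (a - 1) b) * h a b)"
    using shift[of "\<lambda>a. \<Sum>b<m. (if a = 0 then 0 else ?w (a - 1) b) * h a b"] assms(1) by simp
  have col: "(\<Sum>b<m. ?w a b * h a (Suc b)) = (\<Sum>b<m. (if b = 0 then 0 else ?w a (b - 1)) * h a b)"
    for a
    using shift[of "\<lambda>b. (if b = 0 then 0 else ?w a (b - 1)) * h a b"] assms(2) by simp
  have "(\<Sum>a<m. \<Sum>b<m. ?w a b * (2 * h a b - h (Suc a) b - h a (Suc b)))
      = (\<Sum>a<m. \<Sum>b<m. (2 * ?w a b - (if a = 0 then 0 else ?w (a - 1) b)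
           - (if b = 0 then 0 else ?w a (b - 1))) * h a b)"
    using row col by (simp add: algebra_simps sum_subtractf sum.distrib sum_distrib_left)
  also have "\<dots> = (\<Sum>a<m. \<Sum>b<m. of_bool (a = 0 \<and> b = 0) * h a b)"
    by (simp only: pascal_weight_recurrence)
  also have "\<dots> = (\<Sum>a<m. if a = 0 then (\<Sum>b<m. if b = 0 then h 0 0 else 0) else 0)"
    by (intro sum.cong) auto
  also have "\<dots> = h 0 0"
    using assms(1)[of 0] by (cases "m = 0") (simp_all add: sum.delta)
  finally show ?thesis .
qed

section \<open>Matrix identities\<close>

lemma assoc_mult_mat_dim:
  "dim_col A = dim_row B \<Longrightarrow> dim_col B = dim_row C \<Longrightarrow> A * B * C = A * (B * C)"
  by (rule assoc_mult_mat[of A _ _ B _ C]) (auto intro: carrier_matI)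

lemma index_mult_mat_sum:
  "i < dim_row A \<Longrightarrow> j < dim_col B \<Longrightarrow> dim_col A = dim_row B \<Longrightarrow>
   (A * B) $$ (i, j) = (\<Sum>k<dim_row B. A $$ (i, k) * B $$ (k, j))"
  by (simp add: scalar_prod_def atLeast0LessThan)

lemma mat_add_self_eq_zero:
  fixes X :: "real mat"
  assumes "X \<in> carrier_mat n n" and "X + X = 0\<^sub>m n n"
  shows "X = 0\<^sub>m n n"
proof (rule eq_matI)
  fix i j assume "i < dim_row (0\<^sub>m n n :: real mat)" "j < dim_col (0\<^sub>m n n :: real mat)"
  then have ij: "i < n" "j < n" by auto
  have "X $$ (i, j) + X $$ (i, j) = (X + X) $$ (i, j)" using assms(1) ij by simp
  also have "\<dots> = 0" using ij by (simp add: assms(2))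
  finally show "X $$ (i, j) = 0\<^sub>m n n $$ (i, j)" using ij by simp
qed (use assms in auto)

lemma mat_minus_eq_zero:
  fixes X Y :: "real mat"
  assumes "X \<in> carrier_mat n n" "Y \<in> carrier_mat n n" and "X - Y = 0\<^sub>m n n"
  shows "X = Y"
proof (rule eq_matI)
  fix i j assume "i < dim_row Y" "j < dim_col Y"
  then have ij: "i < n" "j < n" using assms by auto
  have "X $$ (i, j) - Y $$ (i, j) = (X - Y) $$ (i, j)" using assms(1,2) ij by simp
  also have "\<dots> = 0" using ij by (simp add: assms(3))
  finally show "X $$ (i, j) = Y $$ (i, j)" by simp
qed (use assms in auto)

lemma lyapunov_minus:
  fixes L S1 S2 :: "real mat"
  assumes L: "L \<in> carrier_mat n n" and S: "S1 \<in> carrier_mat n n" "S2 \<in> carrier_mat n n"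
  shows "L * (S1 - S2) + (S1 - S2) * L\<^sup>T = (L * S1 + S1 * L\<^sup>T) - (L * S2 + S2 * L\<^sup>T)"
  using L S by (simp add: minus_mult_distrib_mat[of _ n n] mult_minus_distrib_mat[of _ n n])
    (rule eq_matI, auto)

lemma lyapunov_one_minus:
  fixes K D :: "real mat"
  assumes K: "K \<in> carrier_mat n n" and D: "D \<in> carrier_mat n n"
  shows "(1\<^sub>m n - K) * D + D * (1\<^sub>m n - K)\<^sup>T = (D + D) - (K * D + D * K\<^sup>T)"
proof -
  have "(1\<^sub>m n - K)\<^sup>T = 1\<^sub>m n - K\<^sup>T"
    using K by (simp add: transpose_minus[of _ n n])
  moreover have "(1\<^sub>m n - K) * D = D - K * D"
    using K D by (simp add: minus_mult_distrib_mat[of _ n n])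
  moreover have "D * (1\<^sub>m n - K\<^sup>T) = D * 1\<^sub>m n - D * K\<^sup>T"
    by (rule mult_minus_distrib_mat) (use K D in auto)
  ultimately show ?thesis
    using K D by (intro eq_matI) auto
qed

lemma pow_mat_eq_zero_ge:
  assumes "K \<in> carrier_mat n n" and "K ^\<^sub>m m = 0\<^sub>m n n" and "m \<le> a"
  shows "K ^\<^sub>m a = 0\<^sub>m n n"
  using assms(3)
proof (induction a rule: dec_induct)
  case (step a)
  then show ?case using assms(1) by simp
qed (fact assms(2))

lemma halving_recurrence_eq_zero:
  fixes T :: "nat \<Rightarrow> nat \<Rightarrow> real mat"
  assumes carrier: "\<And>a b. T a b \<in> carrier_mat n n"
    and step: "\<And>a b. T a b + T a b = T (Suc a) b + T a (Suc b)"
    and vanish: "\<And>a b. m \<le> a \<or> m \<le> b \<Longrightarrow> T a b = 0\<^sub>m n n"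
  shows "T a b = 0\<^sub>m n n"
proof -
  have "T a b = 0\<^sub>m n n" if "2 * m \<le> a + b + d" for a b d
    using that
  proof (induction d arbitrary: a b)
    case 0
    then show ?case by (intro vanish) linarith
  next
    case (Suc d)
    show ?case
    proof (cases "m \<le> a \<or> m \<le> b")
      case True
      then show ?thesis by (rule vanish)
    next
      case False
      then have "T (Suc a) b = 0\<^sub>m n n" "T a (Suc b) = 0\<^sub>m n n"
        using Suc by auto
      then show ?thesis
        using step[of a b] by (intro mat_add_self_eq_zero[OF carrier]) simp
    qed
  qed
  then show ?thesis
    by (metis le_add2)
qed

lemma sylvester_nilpotent_eq_zero:
  fixes K D :: "real mat"
  assumes K: "K \<in> carrier_mat n n" and D: "D \<in> carrier_mat n n"
    and nilpotent: "K ^\<^sub>m m = 0\<^sub>m n n" and eq: "K * D + D * K\<^sup>T = D + D"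
  shows "D = 0\<^sub>m n n"
proof -
  define T where "T a b = K ^\<^sub>m a * D * (K ^\<^sub>m b)\<^sup>T" for a b
  have T_carrier: "T a b \<in> carrier_mat n n" for a b
    unfolding T_def using K D by auto
  have T_vanish: "T a b = 0\<^sub>m n n" if "m \<le> a \<or> m \<le> b" for a b
    using that pow_mat_eq_zero_ge[OF K nilpotent] K D by (auto simp: T_def)
  have T_step: "T a b + T a b = T (Suc a) b + T a (Suc b)" for a b
  proof -
    have Ka: "K ^\<^sub>m a \<in> carrier_mat n n" and Kb: "(K ^\<^sub>m b)\<^sup>T \<in> carrier_mat n n"
      and KD: "K * D \<in> carrier_mat n n" and DK: "D * K\<^sup>T \<in> carrier_mat n n"
      using K D by auto
    have "T a b + T a b = K ^\<^sub>m a * (D + D) * (K ^\<^sub>m b)\<^sup>T"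
      unfolding T_def using Ka Kb D
      by (simp add: mult_add_distrib_mat[of _ n n] add_mult_distrib_mat[of _ n n])
    also have "\<dots> = K ^\<^sub>m a * (K * D) * (K ^\<^sub>m b)\<^sup>T + K ^\<^sub>m a * (D * K\<^sup>T) * (K ^\<^sub>m b)\<^sup>T"
      unfolding eq[symmetric] using Ka Kb KD DK
      by (simp add: mult_add_distrib_mat[of _ n n] add_mult_distrib_mat[of _ n n])
    also have "K ^\<^sub>m a * (K * D) * (K ^\<^sub>m b)\<^sup>T = T (Suc a) b"
      unfolding T_def using Ka K D by (simp add: assoc_mult_mat_dim)
    also have "K ^\<^sub>m a * (D * K\<^sup>T) * (K ^\<^sub>m b)\<^sup>T = T a (Suc b)"
      unfolding T_def using Ka Kb K D
      by (simp add: assoc_mult_mat_dim transpose_mult[of "K ^\<^sub>m b" n n K n])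
    finally show ?thesis .
  qed
  have "T 0 0 = 0\<^sub>m n n"
    using T_carrier T_step T_vanish by (rule halving_recurrence_eq_zero)
  moreover have "T 0 0 = D"
    unfolding T_def using K D by simp
  ultimately show ?thesis by simp
qed

lemma lyapunov_nilpotent_eq_zero:
  fixes K D :: "real mat"
  assumes K: "K \<in> carrier_mat n n" and D: "D \<in> carrier_mat n n"
    and nilpotent: "K ^\<^sub>m m = 0\<^sub>m n n" and eq: "(1\<^sub>m n - K) * D + D * (1\<^sub>m n - K)\<^sup>T = 0\<^sub>m n n"
  shows "D = 0\<^sub>m n n"
proof (rule sylvester_nilpotent_eq_zero[OF K D nilpotent])
  have "(D + D) - (K * D + D * K\<^sup>T) = 0\<^sub>m n n"
    using eq unfolding lyapunov_one_minus[OF K D] .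
  then have "D + D = K * D + D * K\<^sup>T"
    by (rule mat_minus_eq_zero[where n = n, rotated 2]) (use K D in auto)
  then show "K * D + D * K\<^sup>T = D + D"
    by (rule sym)
qed

section \<open>Functional digraphs and the centering projection\<close>

lemma funpow_lessThan:
  assumes "\<And>i. i < N \<Longrightarrow> f i < N" and "i < N"
  shows "(f ^^ a) i < N"
  using assms(2) by (induction a) (auto simp: assms(1))

(* If every node i other than a root r has a single unit-weight out-edge i -> f i, and f r = r,
   then the Laplacian is 1 - fun_mat N f: at the root, degree 0 matches the self-loop of f. *)

definition fun_mat :: "nat \<Rightarrow> (nat \<Rightarrow> nat) \<Rightarrow> real mat" where
  "fun_mat N f = mat N N (\<lambda>(i, j). of_bool (j = f i))"

lemma fun_mat_carrier[simp]: "fun_mat N f \<in> carrier_mat N N"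
  by (simp add: fun_mat_def)

lemma fun_mat_dim[simp]: "dim_row (fun_mat N f) = N" "dim_col (fun_mat N f) = N"
  by (simp_all add: fun_mat_def)

lemma fun_mat_id: "fun_mat N (\<lambda>i. i) = 1\<^sub>m N"
  by (rule eq_matI) (auto simp: fun_mat_def)

lemma fun_mat_mult:
  assumes f: "\<And>i. i < N \<Longrightarrow> f i < N" and B: "B \<in> carrier_mat N k"
  shows "fun_mat N f * B = mat N k (\<lambda>(i, j). B $$ (f i, j))"
proof (rule eq_matI)
  fix i j assume "i < dim_row (mat N k (\<lambda>(i, j). B $$ (f i, j)))"
    "j < dim_col (mat N k (\<lambda>(i, j). B $$ (f i, j)))"
  then have i: "i < N" and j: "j < k" by auto
  have "(fun_mat N f * B) $$ (i, j) = (\<Sum>l<N. of_bool (l = f i) * B $$ (l, j))"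
    using i j B by (subst index_mult_mat_sum) (auto simp: fun_mat_def)
  also have "\<dots> = B $$ (f i, j)"
    using f[OF i] by (simp add: Int_insert_right)
  finally show "(fun_mat N f * B) $$ (i, j) = mat N k (\<lambda>(i, j). B $$ (f i, j)) $$ (i, j)"
    using i j by simp
qed (use B in auto)

lemma mult_transpose_fun_mat:
  assumes f: "\<And>i. i < N \<Longrightarrow> f i < N" and B: "B \<in> carrier_mat k N"
  shows "B * (fun_mat N f)\<^sup>T = mat k N (\<lambda>(i, j). B $$ (i, f j))"
proof -
  have "B * (fun_mat N f)\<^sup>T = (fun_mat N f * B\<^sup>T)\<^sup>T"
    using B by (simp add: transpose_mult[of _ N N _ k])
  also have "\<dots> = mat k N (\<lambda>(i, j). B $$ (i, f j))"
    using B f by (subst fun_mat_mult) (auto intro!: eq_matI)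
  finally show ?thesis .
qed

lemma fun_mat_mult_fun_mat:
  assumes "\<And>i. i < N \<Longrightarrow> f i < N"
  shows "fun_mat N f * fun_mat N g = fun_mat N (g \<circ> f)"
  using assms by (subst fun_mat_mult[OF assms fun_mat_carrier]) (auto intro!: eq_matI simp: fun_mat_def)

definition centering_mat :: "nat \<Rightarrow> real mat" where
  "centering_mat N = 1\<^sub>m N - (1 / real N) \<cdot>\<^sub>m mat N N (\<lambda>_. 1)"

lemma centering_mat_carrier[simp]: "centering_mat N \<in> carrier_mat N N"
  by (simp add: centering_mat_def minus_carrier_mat)

lemma centering_mat_dim[simp]: "dim_row (centering_mat N) = N" "dim_col (centering_mat N) = N"
  by (simp_all add: centering_mat_def)

lemma index_centering_mat:
  "i < N \<Longrightarrow> j < N \<Longrightarrow> centering_mat N $$ (i, j) = of_bool (i = j) - 1 / real N"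
  by (simp add: centering_mat_def)

lemma transpose_centering_mat: "(centering_mat N)\<^sup>T = centering_mat N"
  by (rule eq_matI) (simp_all add: index_centering_mat)

lemma centering_mat_mult:
  assumes M: "M \<in> carrier_mat N k"
  shows "centering_mat N * M = mat N k (\<lambda>(i, j). M $$ (i, j) - (\<Sum>l<N. M $$ (l, j)) / real N)"
proof (rule eq_matI)
  fix i j assume "i < dim_row (mat N k (\<lambda>(i, j). M $$ (i, j) - (\<Sum>l<N. M $$ (l, j)) / real N))"
    "j < dim_col (mat N k (\<lambda>(i, j). M $$ (i, j) - (\<Sum>l<N. M $$ (l, j)) / real N))"
  then have i: "i < N" and j: "j < k" by auto
  have "(centering_mat N * M) $$ (i, j) = (\<Sum>l<N. (of_bool (i = l) - 1 / real N) * M $$ (l, j))"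
    using i j M by (subst index_mult_mat_sum) (auto simp: index_centering_mat)
  also have "\<dots> = M $$ (i, j) - (\<Sum>l<N. M $$ (l, j)) / real N"
    using i by (simp add: left_diff_distrib sum_subtractf sum_divide_distrib Int_insert_right)
  finally show "(centering_mat N * M) $$ (i, j)
      = mat N k (\<lambda>(i, j). M $$ (i, j) - (\<Sum>l<N. M $$ (l, j)) / real N) $$ (i, j)"
    using i j by simp
qed (use M in auto)

lemma mult_centering_mat:
  assumes M: "M \<in> carrier_mat k N"
  shows "M * centering_mat N = mat k N (\<lambda>(i, j). M $$ (i, j) - (\<Sum>l<N. M $$ (i, l)) / real N)"
proof -
  have "M * centering_mat N = (centering_mat N * M\<^sup>T)\<^sup>T"
    using M by (simp add: transpose_mult[of _ N N _ k] transpose_centering_mat)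
  also have "\<dots> = mat k N (\<lambda>(i, j). M $$ (i, j) - (\<Sum>l<N. M $$ (i, l)) / real N)"
    using M by (subst centering_mat_mult) (auto intro!: eq_matI)
  finally show ?thesis .
qed

lemma mult_centering_mat_rowsum_zero:
  assumes "M \<in> carrier_mat k N" and "\<And>i. i < k \<Longrightarrow> (\<Sum>j<N. M $$ (i, j)) = 0"
  shows "M * centering_mat N = M"
  using assms by (subst mult_centering_mat) (auto intro!: eq_matI)

lemma laplacian_mult_centering_mat:
  assumes "A \<in> carrier_mat N N"
  shows "laplacian A * centering_mat N = laplacian A"
proof (rule mult_centering_mat_rowsum_zero)
  show "laplacian A \<in> carrier_mat N N"
    using assms by (simp add: laplacian_def)
  fix i assume i: "i < N"
  have "(\<Sum>j<N. laplacian A $$ (i, j)) = (\<Sum>j<N. of_bool (i = j) * out_degree A i - A $$ (i, j))"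
    using assms i by (intro sum.cong) (auto simp: laplacian_def)
  also have "\<dots> = 0"
    using assms i by (simp add: sum_subtractf out_degree_def Int_insert_right)
  finally show "(\<Sum>j<N. laplacian A $$ (i, j)) = 0" .
qed

section \<open>The matrices Q\<close>

lemma is_Q_matrixD:
  assumes "is_Q_matrix N Q"
  shows "Q \<in> carrier_mat (N - 1) N" and "Q * Q\<^sup>T = 1\<^sub>m (N - 1)"
    and "Q\<^sup>T * Q = centering_mat N"
    and "\<And>i. i < N - 1 \<Longrightarrow> (\<Sum>j<N. Q $$ (i, j)) = 0"
proof -
  show Q: "Q \<in> carrier_mat (N - 1) N"
    using assms by (simp add: is_Q_matrix_def)
  show "Q * Q\<^sup>T = 1\<^sub>m (N - 1)" "Q\<^sup>T * Q = centering_mat N"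
    using assms by (simp_all add: is_Q_matrix_def centering_mat_def)
  fix i assume i: "i < N - 1"
  have "(Q *\<^sub>v vec N (\<lambda>_. 1)) $ i = 0"
    using assms i by (simp add: is_Q_matrix_def)
  then show "(\<Sum>j<N. Q $$ (i, j)) = 0"
    using Q i by (simp add: scalar_prod_def atLeast0LessThan)
qed

lemma is_Q_matrix_transpose_mult:
  assumes Q: "is_Q_matrix N Q" and X: "dim_row X = N"
  shows "Q\<^sup>T * (Q * X) = centering_mat N * X"
proof -
  have "Q\<^sup>T * (Q * X) = Q\<^sup>T * Q * X"
    using carrier_matD[OF is_Q_matrixD(1)[OF Q]] X by (simp add: assoc_mult_mat_dim)
  then show ?thesis
    by (simp add: is_Q_matrixD(3)[OF Q])
qed

lemma is_Q_matrix_fun_mat_centering_mat: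
  assumes Q: "is_Q_matrix N Q" and g: "\<And>i. i < N \<Longrightarrow> g i < N"
  shows "Q * fun_mat N g * centering_mat N = Q * fun_mat N g"
proof (rule mult_centering_mat_rowsum_zero)
  note Q_props = is_Q_matrixD[OF Q]
  show "Q * fun_mat N g \<in> carrier_mat (N - 1) N"
    using Q_props(1) by auto
  fix i assume i: "i < N - 1"
  have "(\<Sum>j<N. (Q * fun_mat N g) $$ (i, j)) = (\<Sum>j<N. \<Sum>l<N. Q $$ (i, l) * of_bool (j = g l))"
    using Q_props(1) i by (intro sum.cong refl, subst index_mult_mat_sum) (auto simp: fun_mat_def)
  also have "\<dots> = (\<Sum>l<N. Q $$ (i, l))"
    using g by (subst sum.swap) (simp add: Int_insert_right)
  finally show "(\<Sum>j<N. (Q * fun_mat N g) $$ (i, j)) = 0"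
    using Q_props(4)[OF i] by simp
qed

lemma is_Q_matrix_mult_fun_mat_const:
  assumes Q: "is_Q_matrix N Q" and g: "\<And>i. i < N \<Longrightarrow> g i = r"
  shows "Q * fun_mat N g = 0\<^sub>m (N - 1) N"
proof (rule eq_matI)
  note Q_props = is_Q_matrixD[OF Q]
  fix i j assume "i < dim_row (0\<^sub>m (N - 1) N :: real mat)" "j < dim_col (0\<^sub>m (N - 1) N :: real mat)"
  then have i: "i < N - 1" and j: "j < N" by auto
  have "(Q * fun_mat N g) $$ (i, j) = (\<Sum>l<N. Q $$ (i, l) * of_bool (j = r))"
    using Q_props(1) i j g by (subst index_mult_mat_sum) (auto simp: fun_mat_def intro!: sum.cong)
  also have "\<dots> = 0"
    using Q_props(4)[OF i] by (simp flip: sum_distrib_right)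
  finally show "(Q * fun_mat N g) $$ (i, j) = 0\<^sub>m (N - 1) N $$ (i, j)"
    using i j by simp
qed (use is_Q_matrixD(1)[OF Q] in auto)

(* The Householder reflection 1 - v v^T / (1 - s) with v = e_0 - s 1 and s = 1 / sqrt N, using
   1 / (1 - s) = sqrt N / (sqrt N - 1).  It is symmetric, orthogonal and maps e_0 to s 1, so its
   rows 1..N-1 form an orthonormal basis of the complement of 1. *)

definition householder_vec :: "nat \<Rightarrow> nat \<Rightarrow> real" where
  "householder_vec N j = of_bool (j = 0) - 1 / sqrt (real N)"

definition householder :: "nat \<Rightarrow> nat \<Rightarrow> nat \<Rightarrow> real" where
  "householder N i j = of_bool (i = j)
     - sqrt (real N) / (sqrt (real N) - 1) * householder_vec N i * householder_vec N j"

lemma householder_vec_sums: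
  assumes "0 < N"
  shows "(\<Sum>j<N. householder_vec N j) = 1 - sqrt (real N)"
    and "(\<Sum>j<N. householder_vec N j * householder_vec N j) = 2 - 2 / sqrt (real N)"
proof -
  define s where "s = 1 / sqrt (real N)"
  have Ns: "real N * s = sqrt (real N)" "real N * s^2 = 1"
    using assms by (simp_all add: s_def power_divide real_div_sqrt)
  have "(\<Sum>j<N. householder_vec N j) = (\<Sum>j<N. of_bool (j = 0)) - real N * s"
    by (simp add: householder_vec_def sum_subtractf s_def)
  then show "(\<Sum>j<N. householder_vec N j) = 1 - sqrt (real N)"
    using assms Ns by simp
  have "(\<Sum>j<N. householder_vec N j * householder_vec N j)
      = (\<Sum>j<N. of_bool (j = 0) * (1 - 2 * s) + s^2)"
    by (intro sum.cong) (auto simp: householder_vec_def s_def power2_eq_square algebra_simps)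
  also have "\<dots> = (1 - 2 * s) + real N * s^2"
    using assms by (simp add: sum.distrib)
  finally
  show "(\<Sum>j<N. householder_vec N j * householder_vec N j) = 2 - 2 / sqrt (real N)"
    using Ns by (simp add: s_def)
qed

lemma householder_orthogonal:
  assumes N: "2 \<le> N" and i: "i < N" and j: "j < N"
  shows "(\<Sum>l<N. householder N i l * householder N j l) = of_bool (i = j)"
proof -
  define t where "t = sqrt (real N)"
  define c where "c = t / (t - 1)"
  let ?v = "householder_vec N"
  have "t > 1"
    using N by (simp add: t_def)
  then have c_sum: "c * c * (2 - 2 / t) = 2 * c"
    by (simp add: c_def divide_simps)
  have "(\<Sum>l<N. householder N i l * householder N j l)
      = (\<Sum>l<N. of_bool (i = l) * of_bool (j = l) - c * ?v j * (of_bool (i = l) * ?v l)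
           - c * ?v i * (of_bool (j = l) * ?v l) + c * c * ?v i * ?v j * (?v l * ?v l))"
    by (intro sum.cong) (simp_all add: householder_def t_def[symmetric] c_def[symmetric] algebra_simps)
  also have "\<dots> = of_bool (i = j) - 2 * c * ?v i * ?v j + c * c * ?v i * ?v j * (2 - 2 / t)"
    using i j N by (simp add: sum.distrib sum_subtractf sum_distrib_left[symmetric]
        householder_vec_sums(2) t_def Int_insert_right)
  also have "\<dots> = of_bool (i = j) - 2 * c * (?v i * ?v j) + c * c * (2 - 2 / t) * (?v i * ?v j)"
    by (simp add: ac_simps)
  also have "\<dots> = of_bool (i = j)"
    by (simp add: c_sum)
  finally show ?thesis .
qed

lemma householder_rowsum:
  assumes N: "2 \<le> N" and i: "i < N"
  shows "(\<Sum>l<N. householder N i l) = of_bool (i = 0) * sqrt (real N)"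
proof -
  define t where "t = sqrt (real N)"
  have t: "t > 1"
    using N by (simp add: t_def)
  have "(\<Sum>l<N. householder N i l)
      = (\<Sum>l<N. of_bool (i = l)) - t / (t - 1) * householder_vec N i * (\<Sum>l<N. householder_vec N l)"
    by (simp add: householder_def t_def sum_subtractf sum_distrib_left)
  also have "\<dots> = 1 - t / (t - 1) * householder_vec N i * (1 - t)"
    using N i by (simp add: householder_vec_sums t_def Int_absorb1)
  also have "\<dots> = of_bool (i = 0) * t"
    using t by (cases "i = 0") (simp_all add: householder_vec_def t_def[symmetric] divide_simps)
  finally show ?thesis by (simp add: t_def)
qed

lemma householder_row_0:
  assumes "2 \<le> N"
  shows "householder N 0 j = 1 / sqrt (real N)"
proof -
  define t where "t = sqrt (real N)"
  have "t > 1"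
    using assms by (simp add: t_def)
  then show ?thesis
    by (cases "j = 0") (simp_all add: householder_def householder_vec_def t_def[symmetric] divide_simps)
qed

lemma householder_sym: "householder N i j = householder N j i"
  by (simp add: householder_def ac_simps)

lemma is_Q_matrix_householder:
  assumes N: "2 \<le> N"
  shows "is_Q_matrix N (mat (N - 1) N (\<lambda>(i, j). householder N (Suc i) j))"
    (is "is_Q_matrix N ?Q")
  unfolding is_Q_matrix_def
proof (intro conjI)
  show "?Q \<in> carrier_mat (N - 1) N"
    by simp
  show "?Q *\<^sub>v vec N (\<lambda>_. 1) = 0\<^sub>v (N - 1)"
  proof (rule eq_vecI)
    fix i assume "i < dim_vec (0\<^sub>v (N - 1) :: real vec)"
    then have "Suc i < N" by simp
    then show "(?Q *\<^sub>v vec N (\<lambda>_. 1)) $ i = 0\<^sub>v (N - 1) $ i"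
      using householder_rowsum[OF N] by (simp add: scalar_prod_def atLeast0LessThan)
  qed simp
  show "?Q * ?Q\<^sup>T = 1\<^sub>m (N - 1)"
  proof (rule eq_matI)
    fix i i' assume "i < dim_row (1\<^sub>m (N - 1) :: real mat)" "i' < dim_col (1\<^sub>m (N - 1) :: real mat)"
    then have "Suc i < N" "Suc i' < N" by auto
    then show "(?Q * ?Q\<^sup>T) $$ (i, i') = 1\<^sub>m (N - 1) $$ (i, i')"
      using householder_orthogonal[OF N] by (subst index_mult_mat_sum) auto
  qed auto
  show "?Q\<^sup>T * ?Q = 1\<^sub>m N - (1 / real N) \<cdot>\<^sub>m mat N N (\<lambda>_. 1)"
  proof (rule eq_matI)
    fix j j' assume "j < dim_row (1\<^sub>m N - (1 / real N) \<cdot>\<^sub>m mat N N (\<lambda>_. 1) :: real mat)"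
      "j' < dim_col (1\<^sub>m N - (1 / real N) \<cdot>\<^sub>m mat N N (\<lambda>_. 1) :: real mat)"
    then have j: "j < N" and j': "j' < N" by auto
    have "(\<Sum>i<N. householder N i j * householder N i j')
        = householder N 0 j * householder N 0 j' + (\<Sum>i<N - 1. householder N (Suc i) j * householder N (Suc i) j')"
      using N sum.lessThan_Suc_shift[of "\<lambda>i. householder N i j * householder N i j'" "N - 1"] by simp
    moreover have "(\<Sum>i<N. householder N i j * householder N i j') = of_bool (j = j')"
      using householder_orthogonal[OF N j j'] by (simp add: householder_sym)
    moreover have "householder N 0 j * householder N 0 j' = 1 / real N"
      using N by (simp add: householder_row_0)
    ultimately show "(?Q\<^sup>T * ?Q) $$ (j, j') = (1\<^sub>m N - (1 / real N) \<cdot>\<^sub>m mat N N (\<lambda>_. 1)) $$ (j, j')"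
      using j j' by (subst index_mult_mat_sum) auto
  qed auto
qed

section \<open>The reduced Lyapunov equation\<close>

(* The inner product of e_x - e_y and e_u - e_v. *)

definition incidence_inner :: "nat \<Rightarrow> nat \<Rightarrow> nat \<Rightarrow> nat \<Rightarrow> real" where
  "incidence_inner x y u v = of_bool (x = u) - of_bool (x = v) - of_bool (y = u) + of_bool (y = v)"

definition grounded_gram :: "nat \<Rightarrow> nat \<Rightarrow> real mat" where
  "grounded_gram N r = mat N N (\<lambda>(x, y). incidence_inner x r y r)"

lemma is_Q_matrix_grounded_gram:
  assumes Q: "is_Q_matrix N Q" and r: "r < N"
  shows "Q * grounded_gram N r * Q\<^sup>T = 1\<^sub>m (N - 1)"
proof -
  note Q_props = is_Q_matrixD[OF Q]
  have QR: "Q * grounded_gram N r = mat (N - 1) N (\<lambda>(i, k). Q $$ (i, k) - Q $$ (i, r))"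
  proof (rule eq_matI)
    fix i k assume "i < dim_row (mat (N - 1) N (\<lambda>(i, k). Q $$ (i, k) - Q $$ (i, r)))"
      "k < dim_col (mat (N - 1) N (\<lambda>(i, k). Q $$ (i, k) - Q $$ (i, r)))"
    then have i: "i < N - 1" and k: "k < N" by auto
    have "(Q * grounded_gram N r) $$ (i, k) = (\<Sum>l<N. Q $$ (i, l) * incidence_inner l r k r)"
      using Q_props(1) i k by (subst index_mult_mat_sum) (auto simp: grounded_gram_def)
    also have "\<dots> = (\<Sum>l<N. of_bool (l = k) * Q $$ (i, l)) - (\<Sum>l<N. of_bool (l = r) * Q $$ (i, l))
        + (1 - of_bool (r = k)) * (\<Sum>l<N. Q $$ (i, l))"
      by (simp add: incidence_inner_def sum_subtractf sum.distrib sum_distrib_left algebra_simps)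
    also have "\<dots> = Q $$ (i, k) - Q $$ (i, r)"
      using k r Q_props(4)[OF i] by (simp add: Int_insert_right)
    finally show "(Q * grounded_gram N r) $$ (i, k) = mat (N - 1) N (\<lambda>(i, k). Q $$ (i, k) - Q $$ (i, r)) $$ (i, k)"
      using i k by simp
  qed (use Q_props(1) in \<open>auto simp: grounded_gram_def\<close>)
  show ?thesis
  proof (rule eq_matI)
    fix i i' assume "i < dim_row (1\<^sub>m (N - 1) :: real mat)" "i' < dim_col (1\<^sub>m (N - 1) :: real mat)"
    then have i: "i < N - 1" and i': "i' < N - 1" by auto
    have "(Q * grounded_gram N r * Q\<^sup>T) $$ (i, i') = (\<Sum>k<N. (Q $$ (i, k) - Q $$ (i, r)) * Q $$ (i', k))"
      unfolding QR using i i' Q_props(1) by (subst index_mult_mat_sum) auto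
    also have "\<dots> = (\<Sum>k<N. Q $$ (i, k) * Q $$ (i', k)) - Q $$ (i, r) * (\<Sum>k<N. Q $$ (i', k))"
      by (simp add: left_diff_distrib sum_subtractf sum_distrib_left)
    also have "(\<Sum>k<N. Q $$ (i, k) * Q $$ (i', k)) = (Q * Q\<^sup>T) $$ (i, i')"
      using i i' Q_props(1) by (subst index_mult_mat_sum) auto
    finally show "(Q * grounded_gram N r * Q\<^sup>T) $$ (i, i') = 1\<^sub>m (N - 1) $$ (i, i')"
      using Q_props(2,4) i' by simp
  qed (use Q_props(1) in auto)
qed

lemma transpose_sandwich:
  fixes Q L :: "real mat"
  assumes "Q \<in> carrier_mat m N" and "L \<in> carrier_mat N N"
  shows "(Q * L * Q\<^sup>T)\<^sup>T = Q * L\<^sup>T * Q\<^sup>T"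
proof -
  have "(Q * L * Q\<^sup>T)\<^sup>T = (Q\<^sup>T)\<^sup>T * (Q * L)\<^sup>T"
    by (rule transpose_mult) (use assms in auto)
  also have "(Q * L)\<^sup>T = L\<^sup>T * Q\<^sup>T"
    by (rule transpose_mult) (use assms in auto)
  finally show ?thesis
    using assms by (simp add: assoc_mult_mat_dim)
qed

lemma reduced_lyapunov_solution:
  fixes L Z R :: "real mat"
  assumes Q: "is_Q_matrix N Q" and L: "L \<in> carrier_mat N N" and L_center: "L * centering_mat N = L"
    and Z: "Z \<in> carrier_mat N N" and eq: "L * Z + Z * L\<^sup>T = R" and QR: "Q * R * Q\<^sup>T = 1\<^sub>m (N - 1)"
  shows "Q * L * Q\<^sup>T * (Q * Z * Q\<^sup>T) + Q * Z * Q\<^sup>T * (Q * L * Q\<^sup>T)\<^sup>T = 1\<^sub>m (N - 1)"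
proof -
  have cQ: "Q \<in> carrier_mat (N - 1) N"
    by (rule is_Q_matrixD(1)[OF Q])
  note Q_dims = carrier_matD[OF cQ]
  have L_center': "L * (centering_mat N * X) = L * X" if "dim_row X = N" for X
  proof -
    have "L * (centering_mat N * X) = L * centering_mat N * X"
      using L that by (simp add: assoc_mult_mat_dim)
    then show ?thesis by (simp add: L_center)
  qed
  have "(L * centering_mat N)\<^sup>T = centering_mat N * L\<^sup>T"
    using L by (simp add: transpose_mult[of L N N _ N] transpose_centering_mat)
  then have center_L': "centering_mat N * (L\<^sup>T * X) = L\<^sup>T * X" if "dim_row X = N" for X
    using L that by (simp add: L_center flip: assoc_mult_mat_dim)
  have left: "Q * L * Q\<^sup>T * (Q * Z * Q\<^sup>T) = Q * (L * (Z * Q\<^sup>T))"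
    using L Z Q_dims by (simp add: assoc_mult_mat_dim is_Q_matrix_transpose_mult[OF Q] L_center')
  have right: "Q * Z * Q\<^sup>T * (Q * L * Q\<^sup>T)\<^sup>T = Q * (Z * (L\<^sup>T * Q\<^sup>T))"
    using L Z Q_dims unfolding transpose_sandwich[OF cQ L]
    by (simp add: assoc_mult_mat_dim is_Q_matrix_transpose_mult[OF Q] center_L')
  have "Q * R * Q\<^sup>T = Q * (L * Z * Q\<^sup>T + Z * L\<^sup>T * Q\<^sup>T)"
    unfolding eq[symmetric] using L Z cQ
    by (simp add: add_mult_distrib_mat[of _ N N] assoc_mult_mat_dim)
  also have "\<dots> = Q * (L * (Z * Q\<^sup>T)) + Q * (Z * (L\<^sup>T * Q\<^sup>T))"
    using L Z cQ by (simp add: mult_add_distrib_mat[of _ "N - 1" N _ "N - 1"] assoc_mult_mat_dim)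
  finally have "Q * (L * (Z * Q\<^sup>T)) + Q * (Z * (L\<^sup>T * Q\<^sup>T)) = Q * R * Q\<^sup>T" ..
  then show ?thesis
    using left right QR by simp
qed

lemma reduced_fun_mat_power:
  assumes Q: "is_Q_matrix N Q" and f: "\<And>i. i < N \<Longrightarrow> f i < N"
  shows "(Q * fun_mat N f * Q\<^sup>T) ^\<^sub>m a = Q * fun_mat N (f ^^ a) * Q\<^sup>T"
proof (induction a)
  case 0
  show ?case
    using is_Q_matrixD(2)[OF Q] carrier_matD[OF is_Q_matrixD(1)[OF Q]] by (simp add: fun_mat_id)
next
  case (Suc a)
  note Q_dims = carrier_matD[OF is_Q_matrixD(1)[OF Q]]
  have fa: "(f ^^ a) i < N" if "i < N" for i
    using f that by (rule funpow_lessThan)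
  have "(Q * fun_mat N f * Q\<^sup>T) ^\<^sub>m Suc a = Q * fun_mat N (f ^^ a) * Q\<^sup>T * (Q * fun_mat N f * Q\<^sup>T)"
    by (simp only: pow_mat.simps Suc.IH)
  also have "\<dots> = Q * fun_mat N (f ^^ a) * centering_mat N * (fun_mat N f * Q\<^sup>T)"
    using Q_dims by (simp add: assoc_mult_mat_dim is_Q_matrix_transpose_mult[OF Q])
  also have "\<dots> = Q * fun_mat N (f ^^ a) * (fun_mat N f * Q\<^sup>T)"
    by (simp only: is_Q_matrix_fun_mat_centering_mat[OF Q fa])
  also have "\<dots> = Q * (fun_mat N (f ^^ a) * fun_mat N f) * Q\<^sup>T"
    using Q_dims by (simp add: assoc_mult_mat_dim)
  also have "\<dots> = Q * fun_mat N (f ^^ Suc a) * Q\<^sup>T"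
    by (simp add: fun_mat_mult_fun_mat[OF fa])
  finally show ?case .
qed

lemma reduced_lyapunov_unique:
  fixes S1 S2 :: "real mat"
  assumes Q: "is_Q_matrix N Q" and f: "\<And>i. i < N \<Longrightarrow> f i < N"
    and root: "\<And>i. i < N \<Longrightarrow> (f ^^ m) i = r"
    and S: "S1 \<in> carrier_mat (N - 1) (N - 1)" "S2 \<in> carrier_mat (N - 1) (N - 1)"
    and Lb_Q: "Lb = Q * (1\<^sub>m N - fun_mat N f) * Q\<^sup>T"
    and eq: "Lb * S1 + S1 * Lb\<^sup>T = Lb * S2 + S2 * Lb\<^sup>T"
  shows "S1 = S2"
proof -
  have cQ: "Q \<in> carrier_mat (N - 1) N"
    by (rule is_Q_matrixD(1)[OF Q])
  define K where "K = Q * fun_mat N f * Q\<^sup>T"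
  have K: "K \<in> carrier_mat (N - 1) (N - 1)"
    unfolding K_def by (rule mult_carrier_mat[OF mult_carrier_mat[OF cQ fun_mat_carrier]]) (use cQ in simp)
  have "Q * (1\<^sub>m N - fun_mat N f) = Q - Q * fun_mat N f"
    using cQ by (simp add: mult_minus_distrib_mat[OF cQ one_carrier_mat fun_mat_carrier])
  then have "Lb = (Q - Q * fun_mat N f) * Q\<^sup>T"
    by (simp add: Lb_Q)
  also have "\<dots> = Q * Q\<^sup>T - K"
    unfolding K_def by (rule minus_mult_distrib_mat) (use cQ in auto)
  finally have Lb: "Lb = 1\<^sub>m (N - 1) - K"
    by (simp add: is_Q_matrixD(2)[OF Q])
  have "K ^\<^sub>m m = Q * fun_mat N (f ^^ m) * Q\<^sup>T"
    unfolding K_def by (rule reduced_fun_mat_power[OF Q f])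
  also have "\<dots> = 0\<^sub>m (N - 1) (N - 1)"
    using cQ by (simp add: is_Q_matrix_mult_fun_mat_const[OF Q root])
  finally have nilpotent: "K ^\<^sub>m m = 0\<^sub>m (N - 1) (N - 1)" .
  have cLb: "Lb \<in> carrier_mat (N - 1) (N - 1)"
    unfolding Lb using K by (rule minus_carrier_mat)
  have "Lb * (S1 - S2) + (S1 - S2) * Lb\<^sup>T = (Lb * S2 + S2 * Lb\<^sup>T) - (Lb * S2 + S2 * Lb\<^sup>T)"
    using lyapunov_minus[OF cLb S] by (simp only: eq)
  also have "\<dots> = 0\<^sub>m (N - 1) (N - 1)"
    by (rule minus_r_inv_mat) (use cLb S in auto)
  finally have "Lb * (S1 - S2) + (S1 - S2) * Lb\<^sup>T = 0\<^sub>m (N - 1) (N - 1)" .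
  then have "S1 - S2 = 0\<^sub>m (N - 1) (N - 1)"
    unfolding Lb by (rule lyapunov_nilpotent_eq_zero[OF K _ nilpotent, rotated]) (use S in auto)
  then show ?thesis
    using S by (rule mat_minus_eq_zero[rotated 2])
qed

section \<open>Effective resistance of a functional digraph\<close>

lemma incidence_inner_grounded:
  "incidence_inner x r u r + incidence_inner y r v r - incidence_inner x r v r - incidence_inner y r u r
     = incidence_inner x y u v"
  by (simp add: incidence_inner_def)

lemma incidence_inner_commute: "incidence_inner x y u v = incidence_inner u v x y"
  by (simp add: incidence_inner_def eq_commute)

(* sum_{a,b<m} w(a,b) P^a R (P^T)^b for P = fun_mat N f and R = grounded_gram N r; the series
   solves the Lyapunov equation of 1 - P since P^m R = 0 once f^m is constantly r. *)

definition walk_potential :: "nat \<Rightarrow> (nat \<Rightarrow> nat) \<Rightarrow> nat \<Rightarrow> nat \<Rightarrow> real mat" where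
  "walk_potential N f m r = mat N N (\<lambda>(i, k).
     \<Sum>a<m. \<Sum>b<m. pascal_weight a b * incidence_inner ((f ^^ a) i) r ((f ^^ b) k) r)"

lemma walk_potential_carrier[simp]: "walk_potential N f m r \<in> carrier_mat N N"
  by (simp add: walk_potential_def)

lemma walk_potential_dim[simp]:
  "dim_row (walk_potential N f m r) = N" "dim_col (walk_potential N f m r) = N"
  by (simp_all add: walk_potential_def)

lemma index_walk_potential_sym:
  assumes "i < N" and "k < N"
  shows "walk_potential N f m r $$ (i, k) = walk_potential N f m r $$ (k, i)"
proof -
  have "walk_potential N f m r $$ (k, i)
      = (\<Sum>b<m. \<Sum>a<m. pascal_weight a b * incidence_inner ((f ^^ a) k) r ((f ^^ b) i) r)"
    using assms by (simp add: walk_potential_def) (rule sum.swap)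
  also have "\<dots> = walk_potential N f m r $$ (i, k)"
    using assms by (simp add: walk_potential_def, intro sum.cong refl) (simp add: incidence_inner_commute pascal_weight_sym)
  finally show ?thesis ..
qed

lemma transpose_walk_potential: "(walk_potential N f m r)\<^sup>T = walk_potential N f m r"
  by (rule eq_matI) (auto simp: index_walk_potential_sym)

lemma walk_potential_lyapunov:
  assumes f: "\<And>i. i < N \<Longrightarrow> f i < N" and root: "\<And>i. i < N \<Longrightarrow> (f ^^ m) i = r"
  defines "L \<equiv> 1\<^sub>m N - fun_mat N f" and "Z \<equiv> walk_potential N f m r"
  shows "L * Z + Z * L\<^sup>T = grounded_gram N r"
proof (rule eq_matI)
  let ?P = "fun_mat N f"
  fix i k assume "i < dim_row (grounded_gram N r)" "k < dim_col (grounded_gram N r)"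
  then have i: "i < N" and k: "k < N" by (auto simp: grounded_gram_def)
  define h where "h a b = incidence_inner ((f ^^ a) i) r ((f ^^ b) k) r" for a b
  have "L * Z = Z - ?P * Z"
    unfolding L_def Z_def by (simp add: minus_mult_distrib_mat[where nr = N and n = N and nc = N])
  moreover have "Z * L\<^sup>T = Z - Z * ?P\<^sup>T"
    unfolding L_def Z_def
    by (simp add: transpose_minus[of _ N N] mult_minus_distrib_mat[where nr = N and n = N and nc = N])
  ultimately have "(L * Z + Z * L\<^sup>T) $$ (i, k) = 2 * Z $$ (i, k) - (?P * Z) $$ (i, k) - (Z * ?P\<^sup>T) $$ (i, k)"
    using i k by (simp add: Z_def)
  also have "(?P * Z) $$ (i, k) = (\<Sum>a<m. \<Sum>b<m. pascal_weight a b * h (Suc a) b)"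
    using i k f unfolding Z_def
    by (subst fun_mat_mult[OF f walk_potential_carrier])
      (simp_all add: walk_potential_def h_def funpow_Suc_right del: funpow.simps)
  also have "(Z * ?P\<^sup>T) $$ (i, k) = (\<Sum>a<m. \<Sum>b<m. pascal_weight a b * h a (Suc b))"
    using i k f unfolding Z_def
    by (subst mult_transpose_fun_mat[OF f walk_potential_carrier])
      (simp_all add: walk_potential_def h_def funpow_Suc_right del: funpow.simps)
  also have "Z $$ (i, k) = (\<Sum>a<m. \<Sum>b<m. pascal_weight a b * h a b)"
    using i k by (simp add: Z_def walk_potential_def h_def)
  also have "2 * (\<Sum>a<m. \<Sum>b<m. pascal_weight a b * h a b) - (\<Sum>a<m. \<Sum>b<m. pascal_weight a b * h (Suc a) b)
      - (\<Sum>a<m. \<Sum>b<m. pascal_weight a b * h a (Suc b))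
      = (\<Sum>a<m. \<Sum>b<m. pascal_weight a b * (2 * h a b - h (Suc a) b - h a (Suc b)))"
    by (simp add: algebra_simps sum_subtractf sum_distrib_left sum.distrib)
  also have "\<dots> = h 0 0"
    by (rule pascal_weight_sum_telescope) (simp_all add: h_def root i k incidence_inner_def)
  finally show "(L * Z + Z * L\<^sup>T) $$ (i, k) = grounded_gram N r $$ (i, k)"
    using i k by (simp add: grounded_gram_def h_def)
qed (auto simp: L_def Z_def grounded_gram_def)

lemma walk_potential_resistance:
  fixes f :: "nat \<Rightarrow> nat" and m r :: nat
  assumes "k < N" and "j < N"
  defines "Z \<equiv> walk_potential N f m r"
  shows "Z $$ (k, k) + Z $$ (j, j) - 2 * Z $$ (k, j)
    = (\<Sum>a<m. \<Sum>b<m. pascal_weight a b * incidence_inner ((f ^^ a) k) ((f ^^ a) j) ((f ^^ b) k) ((f ^^ b) j))"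
proof -
  have "Z $$ (k, k) + Z $$ (j, j) - 2 * Z $$ (k, j) = Z $$ (k, k) + Z $$ (j, j) - Z $$ (k, j) - Z $$ (j, k)"
    using assms index_walk_potential_sym[of j N k f m r] by simp
  also have "\<dots> = (\<Sum>a<m. \<Sum>b<m. pascal_weight a b *
      (incidence_inner ((f ^^ a) k) r ((f ^^ b) k) r + incidence_inner ((f ^^ a) j) r ((f ^^ b) j) r
       - incidence_inner ((f ^^ a) k) r ((f ^^ b) j) r - incidence_inner ((f ^^ a) j) r ((f ^^ b) k) r))"
    using assms by (simp add: walk_potential_def algebra_simps sum_subtractf sum.distrib)
  finally show ?thesis
    by (simp only: incidence_inner_grounded)
qed

lemma centering_sandwich_resistance:
  fixes Z :: "real mat"
  assumes Z: "Z \<in> carrier_mat N N" and sym: "Z\<^sup>T = Z" and k: "k < N" and j: "j < N"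
  defines "X \<equiv> centering_mat N * Z * centering_mat N"
  shows "X $$ (k, k) + X $$ (j, j) - 2 * X $$ (k, j) = Z $$ (k, k) + Z $$ (j, j) - 2 * Z $$ (k, j)"
proof -
  define \<rho> where "\<rho> p = (\<Sum>l<N. Z $$ (p, l))" for p
  define T where "T = (\<Sum>l<N. \<rho> l)"
  have col: "(\<Sum>l<N. Z $$ (l, q)) = \<rho> q" if "q < N" for q
  proof -
    have "(\<Sum>l<N. Z $$ (l, q)) = (\<Sum>l<N. Z\<^sup>T $$ (q, l))"
      using Z that by (intro sum.cong) auto
    then show ?thesis by (simp add: sym \<rho>_def)
  qed
  have "X = mat N N (\<lambda>(p, q). Z $$ (p, q) - \<rho> q / real N) * centering_mat N"
    unfolding X_def using Z col by (subst centering_mat_mult) (auto intro!: arg_cong2[where f = "(*)"] eq_matI)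
  also have "\<dots> = mat N N (\<lambda>(p, q). Z $$ (p, q) - \<rho> q / real N
      - (\<Sum>l<N. Z $$ (p, l) - \<rho> l / real N) / real N)"
    by (subst mult_centering_mat) (auto intro!: eq_matI)
  finally have X_entry: "X $$ (p, q) = Z $$ (p, q) - \<rho> q / real N - (\<rho> p - T / real N) / real N"
    if "p < N" "q < N" for p q
    using that by (simp add: sum_subtractf \<rho>_def T_def sum_divide_distrib)
  show ?thesis
    unfolding X_entry[OF k k] X_entry[OF j j] X_entry[OF k j] by (simp add: diff_divide_distrib algebra_simps)
qed

lemma the_reduced_lyapunov_solution:
  fixes S :: "real mat"
  assumes Q: "is_Q_matrix N Q" and f: "\<And>i. i < N \<Longrightarrow> f i < N"
    and root: "\<And>i. i < N \<Longrightarrow> (f ^^ m) i = r"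
    and Lb: "Lb = Q * (1\<^sub>m N - fun_mat N f) * Q\<^sup>T"
    and S: "S \<in> carrier_mat (N - 1) (N - 1)" and S_sol: "Lb * S + S * Lb\<^sup>T = 1\<^sub>m (N - 1)"
  shows "(THE S. S \<in> carrier_mat (N - 1) (N - 1) \<and> Lb * S + S * Lb\<^sup>T = 1\<^sub>m (N - 1)) = S"
proof (rule the_equality)
  fix S' assume S': "S' \<in> carrier_mat (N - 1) (N - 1) \<and> Lb * S' + S' * Lb\<^sup>T = 1\<^sub>m (N - 1)"
  show "S' = S"
    by (rule reduced_lyapunov_unique[OF Q f root _ S Lb]) (use S' S_sol in simp_all)
qed (use S S_sol in simp)

lemma eff_resistance_eq_potential:
  fixes A Z :: "real mat"
  assumes N: "dim_row A = N" "2 \<le> N"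
    and lap: "laplacian A = 1\<^sub>m N - fun_mat N f"
    and f: "\<And>i. i < N \<Longrightarrow> f i < N" and root: "\<And>i. i < N \<Longrightarrow> (f ^^ m) i = r" and r: "r < N"
    and Z: "Z \<in> carrier_mat N N" "Z\<^sup>T = Z"
    and Z_sol: "laplacian A * Z + Z * (laplacian A)\<^sup>T = grounded_gram N r"
    and k: "k < N" and j: "j < N"
  shows "eff_resistance A k j = 2 * (Z $$ (k, k) + Z $$ (j, j) - 2 * Z $$ (k, j))"
proof -
  define Q where "Q = (SOME Q. is_Q_matrix N Q)"
  have Q: "is_Q_matrix N Q"
    unfolding Q_def using is_Q_matrix_householder[OF N(2)] by (rule someI)
  have cQ: "Q \<in> carrier_mat (N - 1) N"
    by (rule is_Q_matrixD(1)[OF Q])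
  define Lb where "Lb = Q * laplacian A * Q\<^sup>T"
  define S where "S = Q * Z * Q\<^sup>T"
  have "dim_col A = N"
    using arg_cong[OF lap, of dim_col] by (simp add: laplacian_def)
  then have A: "A \<in> carrier_mat N N"
    using N(1) by (auto intro: carrier_matI)
  have S_carrier: "S \<in> carrier_mat (N - 1) (N - 1)"
    unfolding S_def by (rule mult_carrier_mat[OF mult_carrier_mat[OF cQ Z(1)]]) (use cQ in simp)
  have S_sol: "Lb * S + S * Lb\<^sup>T = 1\<^sub>m (N - 1)"
    unfolding Lb_def S_def
    by (rule reduced_lyapunov_solution[OF Q _ laplacian_mult_centering_mat[OF A] Z(1) Z_sol
          is_Q_matrix_grounded_gram[OF Q r]]) (simp add: lap minus_carrier_mat)
  have Lb_fun: "Lb = Q * (1\<^sub>m N - fun_mat N f) * Q\<^sup>T"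
    unfolding Lb_def lap ..
  have the_S: "(THE S. S \<in> carrier_mat (N - 1) (N - 1) \<and> Lb * S + S * Lb\<^sup>T = 1\<^sub>m (N - 1)) = S"
    using f root Lb_fun S_carrier S_sol by (rule the_reduced_lyapunov_solution[OF Q])
  have QSQ: "Q\<^sup>T * S * Q = centering_mat N * Z * centering_mat N"
    using carrier_matD[OF cQ] Z(1)
    by (simp add: S_def assoc_mult_mat_dim is_Q_matrix_transpose_mult[OF Q] is_Q_matrixD(3)[OF Q])
  define X where "X = centering_mat N * Z * centering_mat N"
  have "eff_resistance A k j = 2 * (X $$ (k, k) + X $$ (j, j) - 2 * X $$ (k, j))"
    unfolding eff_resistance_def Let_def N(1) Q_def[symmetric] Lb_def[symmetric] the_S QSQ X_def[symmetric]
    using k j Z(1) by (simp add: X_def del: index_mult_mat(1))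
  also have "X $$ (k, k) + X $$ (j, j) - 2 * X $$ (k, j) = Z $$ (k, k) + Z $$ (j, j) - 2 * Z $$ (k, j)"
    unfolding X_def by (rule centering_sandwich_resistance[OF Z k j])
  finally show ?thesis .
qed

theorem eff_resistance_fun_graph:
  fixes A :: "real mat" and f :: "nat \<Rightarrow> nat"
  assumes N: "dim_row A = N" "2 \<le> N"
    and lap: "laplacian A = 1\<^sub>m N - fun_mat N f"
    and f: "\<And>i. i < N \<Longrightarrow> f i < N" and root: "\<And>i. i < N \<Longrightarrow> (f ^^ m) i = r"
    and k: "k < N" and j: "j < N"
  shows "eff_resistance A k j
    = 2 * (\<Sum>a<m. \<Sum>b<m. pascal_weight a b * incidence_inner ((f ^^ a) k) ((f ^^ a) j) ((f ^^ b) k) ((f ^^ b) j))"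
proof -
  have "(f ^^ m) 0 < N"
    by (rule funpow_lessThan) (use f N(2) in auto)
  then have r: "r < N"
    using root[of 0] N(2) by simp
  have "laplacian A * walk_potential N f m r + walk_potential N f m r * (laplacian A)\<^sup>T = grounded_gram N r"
    unfolding lap using f root by (rule walk_potential_lyapunov)
  then have "eff_resistance A k j
      = 2 * (walk_potential N f m r $$ (k, k) + walk_potential N f m r $$ (j, j) - 2 * walk_potential N f m r $$ (k, j))"
    using N lap f root r walk_potential_carrier transpose_walk_potential k j
    by (intro eff_resistance_eq_potential)
  then show ?thesis
    by (simp add: walk_potential_resistance[OF k j])
qed

section \<open>The trees with two branches\<close>

definition tree_succ :: "nat \<Rightarrow> nat \<Rightarrow> nat \<Rightarrow> nat" where
  "tree_succ n m i = (if i < n \<or> (n < i \<and> i < n + m) then Suc i else n)"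

lemma tree_succ_lessThan: "i < n + m + 1 \<Longrightarrow> tree_succ n m i < n + m + 1"
  by (simp add: tree_succ_def)

lemma funpow_tree_succ:
  "i < n + m + 1 \<Longrightarrow>
   (tree_succ n m ^^ a) i = (if i \<le> n then min (i + a) n else if i + a \<le> n + m then i + a else n)"
  by (induction a) (auto simp: tree_succ_def)

lemma tree_adj_dim[simp]: "dim_row (tree_adj n m) = n + m + 1" "dim_col (tree_adj n m) = n + m + 1"
  by (simp_all add: tree_adj_def)

lemma index_tree_adj:
  "1 \<le> m \<Longrightarrow> i < n + m + 1 \<Longrightarrow> l < n + m + 1 \<Longrightarrow>
   tree_adj n m $$ (i, l) = of_bool (i \<noteq> n \<and> l = tree_succ n m i)"
  by (auto simp: tree_adj_def tree_edge_def tree_succ_def)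

lemma laplacian_tree_adj:
  assumes "1 \<le> m"
  shows "laplacian (tree_adj n m) = 1\<^sub>m (n + m + 1) - fun_mat (n + m + 1) (tree_succ n m)"
proof (rule eq_matI)
  let ?N = "n + m + 1"
  fix i j assume "i < dim_row (1\<^sub>m ?N - fun_mat ?N (tree_succ n m))" "j < dim_col (1\<^sub>m ?N - fun_mat ?N (tree_succ n m))"
  then have i: "i < ?N" and j: "j < ?N" by auto
  have "out_degree (tree_adj n m) i = (\<Sum>l<?N. of_bool (l = tree_succ n m i) * of_bool (i \<noteq> n))"
    unfolding out_degree_def using assms i by (intro sum.cong) (auto simp: index_tree_adj)
  also have "\<dots> = of_bool (i \<noteq> n)"
    using tree_succ_lessThan[OF i] by (simp add: Int_insert_right)
  finally have "out_degree (tree_adj n m) i = of_bool (i \<noteq> n)" .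
  then show "laplacian (tree_adj n m) $$ (i, j) = (1\<^sub>m ?N - fun_mat ?N (tree_succ n m)) $$ (i, j)"
    using assms i j by (auto simp: laplacian_def index_tree_adj fun_mat_def tree_succ_def)
qed (auto simp: laplacian_def)

lemma r_tree_eq_pascal_sum:
  assumes "1 \<le> m"
  shows "r_tree n m = 2 * (\<Sum>a<max n m. \<Sum>b<max n m. pascal_weight a b *
    incidence_inner ((tree_succ n m ^^ a) 0) ((tree_succ n m ^^ a) (Suc n))
      ((tree_succ n m ^^ b) 0) ((tree_succ n m ^^ b) (Suc n)))"
  unfolding r_tree_def Suc_eq_plus1[symmetric]
  by (rule eff_resistance_fun_graph[where r = n])
    (use assms in \<open>auto simp: laplacian_tree_adj tree_succ_lessThan[simplified] funpow_tree_succ\<close>)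

lemma pascal_two_branch_sum:
  assumes "1 \<le> n"
  shows "(\<Sum>a<n. \<Sum>b<n. pascal_weight a b * (of_bool (a = b) + of_bool ((a = 0) = (b = 0))))
    = real n - 1 + 2 / 2 ^ n"
  using assms
proof (induction n rule: dec_induct)
  case base
  show ?case by simp
next
  case (step n)
  let ?w = pascal_weight
  define g :: "nat \<Rightarrow> nat \<Rightarrow> real" where "g a b = of_bool (a = b) + of_bool ((a = 0) = (b = 0))" for a b
  have g_sym: "g a b = g b a" for a b
    by (auto simp: g_def)
  have border: "(\<Sum>a<n. ?w a n * g a n) = (\<Sum>a<n. ?w a n) - ?w 0 n"
  proof -
    have "(\<Sum>a<n. ?w a n * g a n) = (\<Sum>a<n. ?w a n - of_bool (a = 0) * ?w a n)"
      using step.hyps by (intro sum.cong) (auto simp: g_def)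
    then show ?thesis
      using step.hyps by (simp add: sum_subtractf Int_insert_right)
  qed
  have column: "(\<Sum>a<n. ?w a n) = 1 / 2 - ?w n n"
    using pascal_weight_column_sum[of n] by (simp add: lessThan_Suc_atMost[symmetric])
  have "(\<Sum>a<Suc n. \<Sum>b<Suc n. ?w a b * g a b)
      = (\<Sum>a<n. \<Sum>b<n. ?w a b * g a b) + (\<Sum>a<n. ?w a n * g a n) + (\<Sum>b<n. ?w n b * g n b) + ?w n n * g n n"
    by (simp add: sum.distrib)
  also have "(\<Sum>b<n. ?w n b * g n b) = (\<Sum>a<n. ?w a n * g a n)"
    by (intro sum.cong refl) (simp add: pascal_weight_sym[of n] g_sym[of n])
  also have "g n n = 2"
    by (simp add: g_def)
  finally show ?case
    using step.IH border column by (simp add: g_def pascal_weight_0_left)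
qed

lemma incidence_inner_two_leaves:
  assumes "a < n" and "b < n"
  shows "incidence_inner ((tree_succ n 1 ^^ a) 0) ((tree_succ n 1 ^^ a) (Suc n))
      ((tree_succ n 1 ^^ b) 0) ((tree_succ n 1 ^^ b) (Suc n)) = of_bool (a = b) + of_bool ((a = 0) = (b = 0))"
  using assms by (auto simp: funpow_tree_succ incidence_inner_def)

theorem lemma6:
  fixes n :: nat
  assumes "n \<ge> 1"
  shows "r_tree n 1 = 2 * (real n - 1) + 2 powr (2 - real n)"
proof -
  have "r_tree n 1 = 2 * (\<Sum>a<n. \<Sum>b<n. pascal_weight a b *
      incidence_inner ((tree_succ n 1 ^^ a) 0) ((tree_succ n 1 ^^ a) (Suc n))
        ((tree_succ n 1 ^^ b) 0) ((tree_succ n 1 ^^ b) (Suc n)))"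
    using r_tree_eq_pascal_sum[of 1 n] assms by (simp add: max_absorb1)
  also have "\<dots> = 2 * (\<Sum>a<n. \<Sum>b<n. pascal_weight a b * (of_bool (a = b) + of_bool ((a = 0) = (b = 0))))"
    by (intro arg_cong[where f = "\<lambda>x. 2 * x"] sum.cong refl, subst incidence_inner_two_leaves) auto
  also have "\<dots> = 2 * (real n - 1 + 2 / 2 ^ n)"
    by (simp only: pascal_two_branch_sum[OF assms])
  also have "\<dots> = 2 * (real n - 1) + 2 powr (2 - real n)"
    by (simp add: powr_diff powr_realpow)
  finally show ?thesis .
qed

end
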